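(* Let $P=\begin{pmatrix}\alpha&\beta\\\gamma&\delta\end{pmatrix}\in\mathbb{N}_0^{2\times2}$ be an incidence matrix such that (i) there exists a pair $(i,j)\in\{(\alpha,\beta),(\alpha,\gamma),(\delta,\beta),(\delta,\gamma)\}$ with $\gcd(i,j)\neq1$, and (ii) a row (respectively column) of $P$ dominates the other row (respectively column) of $P$. Then $P$ does not exclusively represent irreducible morphisms.
   Context: Let $\Sigma=\{a,b\}$ with $a_1=a,a_2=b$. A morphism $\varphi:\Sigma^+\to\Sigma^+$ (non-empty images) is Parikh-positive if both letters occur in $\varphi(a)\varphi(b)$. Its incidence matrix is $P(\varphi)=(m_{i,j})$ with $m_{i,j}=|\varphi(a_j)|_{a_i}$; throughout, incidence matrices considered have no zero rows or columns. An automorphism is an injective morphism mapping each letter to a single letter; a morphism is reducible if it equals $\psi_2\circ\psi_1$ with neither $\psi_1,\psi_2$ an automorphism, irreducible otherwise. An incidence matrix $P$ exclusively represents irreducible morphisms if every Parikh-positive morphism $\varphi$ with $P(\varphi)=P$ is irreducible. A row (or column) $(x_1,x_2)$ dominates a row (or column) $(y_1,y_2)$ if $x_1\geq y_1$ and $x_2\geq y_2$. *)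

theory Defs
  imports Main
begin

datatype letter = A | B

text \<open>A morphism Sigma^+ -> Sigma^+ is determined by the (non-empty) images of the letters.\<close>
definition is_morphism :: "(letter \<Rightarrow> letter list) \<Rightarrow> bool" where
  "is_morphism f \<longleftrightarrow> (\<forall>x. f x \<noteq> [])"

definition ext :: "(letter \<Rightarrow> letter list) \<Rightarrow> letter list \<Rightarrow> letter list" where
  "ext f w = concat (map f w)"

definition parikh_positive :: "(letter \<Rightarrow> letter list) \<Rightarrow> bool" where
  "parikh_positive f \<longleftrightarrow> (\<forall>x. x \<in> set (f A @ f B))"

definition incidence :: "(letter \<Rightarrow> letter list) \<Rightarrow> letter \<Rightarrow> letter \<Rightarrow> nat" where
  "incidence f i j = count_list (f j) i"

definition has_incidence :: "(letter \<Rightarrow> letter list) \<Rightarrow> nat \<Rightarrow> nat \<Rightarrow> nat \<Rightarrow> nat \<Rightarrow> bool" where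
  "has_incidence f \<alpha> \<beta> \<gamma> \<delta> \<longleftrightarrow>
     incidence f A A = \<alpha> \<and> incidence f A B = \<beta> \<and>
     incidence f B A = \<gamma> \<and> incidence f B B = \<delta>"

definition automorphism :: "(letter \<Rightarrow> letter list) \<Rightarrow> bool" where
  "automorphism f \<longleftrightarrow> (\<exists>g. inj g \<and> (\<forall>x. f x = [g x]))"

definition reducible :: "(letter \<Rightarrow> letter list) \<Rightarrow> bool" where
  "reducible f \<longleftrightarrow> (\<exists>\<psi>1 \<psi>2. is_morphism \<psi>1 \<and> is_morphism \<psi>2 \<and>
      \<not> automorphism \<psi>1 \<and> \<not> automorphism \<psi>2 \<and>
      (\<forall>w. w \<noteq> [] \<longrightarrow> ext f w = ext \<psi>2 (ext \<psi>1 w)))"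

definition irreducible :: "(letter \<Rightarrow> letter list) \<Rightarrow> bool" where
  "irreducible f \<longleftrightarrow> \<not> reducible f"

definition excl_irreducible :: "nat \<Rightarrow> nat \<Rightarrow> nat \<Rightarrow> nat \<Rightarrow> bool" where
  "excl_irreducible \<alpha> \<beta> \<gamma> \<delta> \<longleftrightarrow>
     (\<forall>f. is_morphism f \<and> parikh_positive f \<and> has_incidence f \<alpha> \<beta> \<gamma> \<delta> \<longrightarrow> irreducible f)"

definition dominates :: "nat \<times> nat \<Rightarrow> nat \<times> nat \<Rightarrow> bool" where
  "dominates x y \<longleftrightarrow> fst x \<ge> fst y \<and> snd x \<ge> snd y"

end

theory Submission
  imports Defs
begin

text \<open>
  Composition of morphisms multiplies incidence matrices, every matrix without zero columns is
  the incidence matrix of some morphism, and automorphisms have permutation matrices. So P does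
  not exclusively represent irreducible morphisms as soon as P = M N with neither factor a
  permutation matrix. If a row (column) of P has gcd d \<ge> 2, take as left (right) factor the
  diagonal matrix scaling that row (column) by d; the other factor has the zero pattern of P,
  and no row or column dominates another in a matrix with the zero pattern of a permutation.
\<close>

type_synonym matrix = "letter \<Rightarrow> letter \<Rightarrow> nat"

definition matrix2 :: "nat \<Rightarrow> nat \<Rightarrow> nat \<Rightarrow> nat \<Rightarrow> matrix" where
  "matrix2 \<alpha> \<beta> \<gamma> \<delta> i j =
     (case (i, j) of (A, A) \<Rightarrow> \<alpha> | (A, B) \<Rightarrow> \<beta> | (B, A) \<Rightarrow> \<gamma> | (B, B) \<Rightarrow> \<delta>)"

lemma matrix2_simps [simp]:
  "matrix2 \<alpha> \<beta> \<gamma> \<delta> A A = \<alpha>" "matrix2 \<alpha> \<beta> \<gamma> \<delta> A B = \<beta>"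
  "matrix2 \<alpha> \<beta> \<gamma> \<delta> B A = \<gamma>" "matrix2 \<alpha> \<beta> \<gamma> \<delta> B B = \<delta>"
  by (simp_all add: matrix2_def)

definition matrix_mult :: "matrix \<Rightarrow> matrix \<Rightarrow> matrix" where
  "matrix_mult M N i j = M i A * N A j + M i B * N B j"

definition permutation_matrix :: "matrix \<Rightarrow> bool" where
  "permutation_matrix M \<longleftrightarrow> (\<exists>g. bij g \<and> M = (\<lambda>i j. if i = g j then 1 else 0))"

definition scaling :: "letter \<Rightarrow> nat \<Rightarrow> matrix" where
  "scaling k d i j = (if i \<noteq> j then 0 else if i = k then d else 1)"

definition has_dominating_line :: "matrix \<Rightarrow> bool" where
  "has_dominating_line P \<longleftrightarrow>
     (\<exists>i k. i \<noteq> k \<and> (\<forall>j. P k j \<le> P i j)) \<or> (\<exists>j l. j \<noteq> l \<and> (\<forall>i. P i l \<le> P i j))"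

definition realization :: "matrix \<Rightarrow> letter \<Rightarrow> letter list" where
  "realization M j = replicate (M A j) A @ replicate (M B j) B"

lemma all_letter_iff: "(\<forall>x. Q x) \<longleftrightarrow> Q A \<and> Q B"
  by (metis (full_types) letter.exhaust)

lemma ex_letter_iff: "(\<exists>x. Q x) \<longleftrightarrow> Q A \<or> Q B"
  by (metis (full_types) letter.exhaust)

lemma incidence_matrix2_iff: "has_incidence f \<alpha> \<beta> \<gamma> \<delta> \<longleftrightarrow> incidence f = matrix2 \<alpha> \<beta> \<gamma> \<delta>"
  by (simp add: has_incidence_def fun_eq_iff all_letter_iff)

lemma matrix_mult_scaling_left: "matrix_mult (scaling k d) N i j = (if i = k then d else 1) * N i j"
  by (cases i; cases k) (simp_all add: matrix_mult_def scaling_def)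

lemma matrix_mult_scaling_right: "matrix_mult M (scaling k d) i j = M i j * (if j = k then d else 1)"
  by (cases j; cases k) (simp_all add: matrix_mult_def scaling_def)

lemma count_list_replicate: "count_list (replicate n x) y = (if x = y then n else 0)"
  by (induction n) auto

lemma incidence_realization [simp]: "incidence (realization M) = M"
proof (intro ext)
  fix i j show "incidence (realization M) i j = M i j"
    by (cases i) (simp_all add: incidence_def realization_def count_list_replicate)
qed

lemma is_morphism_realization: "is_morphism (realization M) \<longleftrightarrow> (\<forall>j. \<exists>i. M i j \<noteq> 0)"
  by (simp add: is_morphism_def realization_def ex_letter_iff)

lemma count_list_ext:
  "count_list (ext \<psi> w) i = count_list w A * count_list (\<psi> A) i + count_list w B * count_list (\<psi> B) i"
  unfolding ext_def
proof (induction w)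
  case (Cons x w)
  then show ?case by (cases x) simp_all
qed simp

lemma incidence_comp:
  "incidence (ext \<psi>2 \<circ> \<psi>1) = matrix_mult (incidence \<psi>2) (incidence \<psi>1)"
  by (intro ext) (simp add: incidence_def matrix_mult_def count_list_ext mult.commute)

lemma parikh_positive_iff: "parikh_positive f \<longleftrightarrow> (\<forall>i. \<exists>j. incidence f i j \<noteq> 0)"
  by (simp add: parikh_positive_def incidence_def all_letter_iff ex_letter_iff count_list_0_iff)

lemma permutation_matrix_incidence:
  assumes "automorphism f"
  shows "permutation_matrix (incidence f)"
proof -
  obtain g where "inj g" and f: "\<And>x. f x = [g x]"
    using assms unfolding automorphism_def by blast
  have "surj g"
  proof (rule surjI)
    fix y
    have "g A \<noteq> g B"
      using \<open>inj g\<close> by (simp add: inj_eq)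
    then show "g (if g A = y then A else B) = y"
      by (cases y; cases "g A"; cases "g B") auto
  qed
  with \<open>inj g\<close> have "bij g"
    by (rule bijI)
  moreover have "incidence f = (\<lambda>i j. if i = g j then 1 else 0)"
    by (intro ext) (simp add: incidence_def f)
  ultimately show ?thesis
    unfolding permutation_matrix_def by blast
qed

lemma is_morphism_comp:
  assumes "is_morphism \<psi>1" "is_morphism \<psi>2"
  shows "is_morphism (ext \<psi>2 \<circ> \<psi>1)"
  unfolding is_morphism_def
proof
  fix x
  obtain y ys where "\<psi>1 x = y # ys"
    using assms(1) by (meson is_morphism_def neq_Nil_conv)
  then show "(ext \<psi>2 \<circ> \<psi>1) x \<noteq> []"
    using assms(2) by (simp add: ext_def is_morphism_def)
qed

lemma ext_ext: "ext (ext \<psi>2 \<circ> \<psi>1) w = ext \<psi>2 (ext \<psi>1 w)"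
  unfolding ext_def by (induction w) auto

lemma reducible_comp:
  assumes "is_morphism \<psi>1" "is_morphism \<psi>2" "\<not> automorphism \<psi>1" "\<not> automorphism \<psi>2"
  shows "reducible (ext \<psi>2 \<circ> \<psi>1)"
  unfolding reducible_def using assms ext_ext by blast

lemma not_excl_irreducible_if_factorization:
  assumes P: "matrix_mult M N = matrix2 \<alpha> \<beta> \<gamma> \<delta>"
    and "\<forall>j. \<exists>i. M i j \<noteq> 0" "\<forall>j. \<exists>i. N i j \<noteq> 0"
    and "\<not> permutation_matrix M" "\<not> permutation_matrix N"
    and "\<forall>i. \<exists>j. matrix_mult M N i j \<noteq> 0"
  shows "\<not> excl_irreducible \<alpha> \<beta> \<gamma> \<delta>"
proof -
  define f where "f = ext (realization M) \<circ> realization N"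
  have factors_morphisms: "is_morphism (realization M)" "is_morphism (realization N)"
    using assms(2,3) by (simp_all add: is_morphism_realization)
  have incidence: "incidence f = matrix_mult M N"
    by (simp add: f_def incidence_comp)
  have "\<not> automorphism (realization M)" "\<not> automorphism (realization N)"
    using assms(4,5) permutation_matrix_incidence incidence_realization by metis+
  then have "reducible f"
    unfolding f_def using factors_morphisms reducible_comp by blast
  moreover have "is_morphism f"
    unfolding f_def using factors_morphisms by (intro is_morphism_comp)
  moreover have "parikh_positive f" "has_incidence f \<alpha> \<beta> \<gamma> \<delta>"
    using assms(6) P by (simp_all add: parikh_positive_iff incidence_matrix2_iff incidence)
  ultimately show ?thesis
    unfolding excl_irreducible_def irreducible_def by blast
qed

lemma not_permutation_matrix_scaling:
  assumes "2 \<le> d"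
  shows "\<not> permutation_matrix (scaling k d)"
proof
  assume "permutation_matrix (scaling k d)"
  then have "scaling k d k k \<le> 1"
    unfolding permutation_matrix_def by auto
  with assms show False
    by (simp add: scaling_def)
qed

lemma not_permutation_matrix_if_dominating:
  assumes "has_dominating_line P" and same_zeros: "\<And>i j. N i j = 0 \<longleftrightarrow> P i j = 0"
  shows "\<not> permutation_matrix N"
proof
  assume "permutation_matrix N"
  then obtain g where "bij g" and N: "N = (\<lambda>i j. if i = g j then 1 else 0)"
    unfolding permutation_matrix_def by blast
  have support: "P i j \<noteq> 0 \<longleftrightarrow> i = g j" for i j
    using same_zeros[of i j] by (simp add: N split: if_splits)
  show False
    using \<open>has_dominating_line P\<close> unfolding has_dominating_line_def
  proof (elim disjE exE conjE)
    fix i k assume "i \<noteq> k" "\<forall>j. P k j \<le> P i j"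
    then have "P i (inv g k) \<noteq> 0"
      using support[of k "inv g k"] \<open>bij g\<close> by (metis bij_inv_eq_iff le_zero_eq)
    then show False
      using support \<open>i \<noteq> k\<close> \<open>bij g\<close> by (metis bij_inv_eq_iff)
  next
    fix j l assume "j \<noteq> l" "\<forall>i. P i l \<le> P i j"
    then have "P (g l) j \<noteq> 0"
      using support[of "g l" l] by (metis le_zero_eq)
    then show False
      using support \<open>j \<noteq> l\<close> \<open>bij g\<close> by (metis bij_is_inj injD)
  qed
qed

lemma gcd_ge_2: "gcd a b \<noteq> 1 \<Longrightarrow> a \<noteq> 0 \<or> b \<noteq> 0 \<Longrightarrow> 2 \<le> gcd a (b::nat)"
  using gcd_eq_0_iff[of a b] by linarith

lemma not_excl_irreducible_row_gcd:
  assumes P: "P = matrix2 \<alpha> \<beta> \<gamma> \<delta>" and "has_dominating_line P"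
    and rows: "\<forall>i. \<exists>j. P i j \<noteq> 0" and cols: "\<forall>j. \<exists>i. P i j \<noteq> 0"
    and "gcd (P k A) (P k B) \<noteq> 1"
  shows "\<not> excl_irreducible \<alpha> \<beta> \<gamma> \<delta>"
proof -
  define d where "d = gcd (P k A) (P k B)"
  have "2 \<le> d"
    unfolding d_def using assms(5) rows by (metis gcd_ge_2 letter.exhaust)
  have dvd: "d dvd P k j" for j
    by (cases j) (simp_all add: d_def)
  define N where "N i j = (if i = k then P i j div d else P i j)" for i j
  have factorization: "matrix_mult (scaling k d) N = P"
    by (intro ext) (simp add: matrix_mult_scaling_left N_def dvd)
  have same_zeros: "N i j = 0 \<longleftrightarrow> P i j = 0" for i j
    using dvd[of j] by (simp add: N_def dvd_div_eq_0_iff)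
  show ?thesis
  proof (rule not_excl_irreducible_if_factorization[of "scaling k d" N])
    show "matrix_mult (scaling k d) N = matrix2 \<alpha> \<beta> \<gamma> \<delta>"
      "\<forall>i. \<exists>j. matrix_mult (scaling k d) N i j \<noteq> 0"
      using factorization P rows by simp_all
    show "\<forall>j. \<exists>i. scaling k d i j \<noteq> 0" "\<not> permutation_matrix (scaling k d)"
      using \<open>2 \<le> d\<close> not_permutation_matrix_scaling by (auto simp: scaling_def)
    show "\<forall>j. \<exists>i. N i j \<noteq> 0"
      using cols same_zeros by simp
    show "\<not> permutation_matrix N"
      using \<open>has_dominating_line P\<close> same_zeros by (rule not_permutation_matrix_if_dominating)
  qed
qed

lemma not_excl_irreducible_column_gcd:
  assumes P: "P = matrix2 \<alpha> \<beta> \<gamma> \<delta>" and "has_dominating_line P"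
    and rows: "\<forall>i. \<exists>j. P i j \<noteq> 0" and cols: "\<forall>j. \<exists>i. P i j \<noteq> 0"
    and "gcd (P A k) (P B k) \<noteq> 1"
  shows "\<not> excl_irreducible \<alpha> \<beta> \<gamma> \<delta>"
proof -
  define d where "d = gcd (P A k) (P B k)"
  have "2 \<le> d"
    unfolding d_def using assms(5) cols by (metis gcd_ge_2 letter.exhaust)
  have dvd: "d dvd P i k" for i
    by (cases i) (simp_all add: d_def)
  define M where "M i j = (if j = k then P i j div d else P i j)" for i j
  have factorization: "matrix_mult M (scaling k d) = P"
    by (intro ext) (simp add: matrix_mult_scaling_right M_def dvd)
  have same_zeros: "M i j = 0 \<longleftrightarrow> P i j = 0" for i j
    using dvd[of i] by (simp add: M_def dvd_div_eq_0_iff)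
  show ?thesis
  proof (rule not_excl_irreducible_if_factorization[of M "scaling k d"])
    show "matrix_mult M (scaling k d) = matrix2 \<alpha> \<beta> \<gamma> \<delta>"
      "\<forall>i. \<exists>j. matrix_mult M (scaling k d) i j \<noteq> 0"
      using factorization P rows by simp_all
    show "\<forall>j. \<exists>i. scaling k d i j \<noteq> 0" "\<not> permutation_matrix (scaling k d)"
      using \<open>2 \<le> d\<close> not_permutation_matrix_scaling by (auto simp: scaling_def)
    show "\<forall>j. \<exists>i. M i j \<noteq> 0"
      using cols same_zeros by simp
    show "\<not> permutation_matrix M"
      using \<open>has_dominating_line P\<close> same_zeros by (rule not_permutation_matrix_if_dominating)
  qed
qed

lemma has_dominating_line_matrix2:
  "has_dominating_line (matrix2 \<alpha> \<beta> \<gamma> \<delta>) \<longleftrightarrow>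
     dominates (\<alpha>, \<beta>) (\<gamma>, \<delta>) \<or> dominates (\<gamma>, \<delta>) (\<alpha>, \<beta>) \<or>
     dominates (\<alpha>, \<gamma>) (\<beta>, \<delta>) \<or> dominates (\<beta>, \<delta>) (\<alpha>, \<gamma>)"
  unfolding has_dominating_line_def dominates_def ex_letter_iff all_letter_iff by auto

theorem proposition24:
  fixes \<alpha> \<beta> \<gamma> \<delta> :: nat
  assumes no_zero_rows: "(\<alpha>, \<beta>) \<noteq> (0, 0)" "(\<gamma>, \<delta>) \<noteq> (0, 0)"
    and no_zero_cols: "(\<alpha>, \<gamma>) \<noteq> (0, 0)" "(\<beta>, \<delta>) \<noteq> (0, 0)"
    and gcd_cond: "\<exists>(i, j) \<in> {(\<alpha>, \<beta>), (\<alpha>, \<gamma>), (\<delta>, \<beta>), (\<delta>, \<gamma>)}. gcd i j \<noteq> 1"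
    and dom_cond: "dominates (\<alpha>, \<beta>) (\<gamma>, \<delta>) \<or> dominates (\<gamma>, \<delta>) (\<alpha>, \<beta>) \<or>
                   dominates (\<alpha>, \<gamma>) (\<beta>, \<delta>) \<or> dominates (\<beta>, \<delta>) (\<alpha>, \<gamma>)"
  shows "\<not> excl_irreducible \<alpha> \<beta> \<gamma> \<delta>"
proof -
  define P where "P = matrix2 \<alpha> \<beta> \<gamma> \<delta>"
  have rows: "\<forall>i. \<exists>j. P i j \<noteq> 0" and cols: "\<forall>j. \<exists>i. P i j \<noteq> 0"
    using no_zero_rows no_zero_cols by (simp_all add: P_def all_letter_iff ex_letter_iff)
  have "has_dominating_line P"
    using dom_cond by (simp add: P_def has_dominating_line_matrix2)
  have "gcd \<alpha> \<beta> \<noteq> 1 \<or> gcd \<alpha> \<gamma> \<noteq> 1 \<or> gcd \<beta> \<delta> \<noteq> 1 \<or> gcd \<gamma> \<delta> \<noteq> 1"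
    using gcd_cond by (simp add: gcd.commute)
  then consider (row) k where "gcd (P k A) (P k B) \<noteq> 1"
    | (column) k where "gcd (P A k) (P B k) \<noteq> 1"
    unfolding P_def by (metis matrix2_simps)
  then show ?thesis
  proof cases
    case row
    with P_def \<open>has_dominating_line P\<close> rows cols show ?thesis
      by (rule not_excl_irreducible_row_gcd)
  next
    case column
    with P_def \<open>has_dominating_line P\<close> rows cols show ?thesis
      by (rule not_excl_irreducible_column_gcd)
  qed
qed

end
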